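(* Let $I=[a,b)\subseteq[0,1)$ with $a<b$. (a) For every $x^n\in\{0,1\}^n$, $\bar F_I(x^n)\ge F_I(x^n-1)$. (b) For every $x^n$ that is not the largest element in Gray order, $\bar F_I(x^n)\ge\lfloor F_I(x^n)\rfloor_{\lambda_h(x^n+1)}$. (c) Consequently, for every $x^n$ that is neither the smallest nor the largest element in Gray order, $$\Big[\min\{\bar F_I(x^n-1),F_I(x^n-1)\},\ \min\{\bar F_I(x^n),F_I(x^n)\}\Big)\subseteq\Big[\lfloor F_I(x^n-1)\rfloor_{\lambda_h(x^n)},\ \bar F_I(x^n)\Big).$$
   Context: Let $p$ be a probability distribution on $\{0,1\}$ with $p(0),p(1)\in(0,1)$, $p(0)\ne p(1)$, $\rho=\max\{p(0)/p(1),p(1)/p(0)\}$, and $p(x^n)=\prod_i p(x_i)$. Gray code is $g(x^n)=x^n\oplus(0,x_1,\dots,x_{n-1})$; Gray order $\preceq_G$ on $\{0,1\}^n$ is $x^n\preceq_G y^n$ iff $g^{-1}(x^n)\preceq_L g^{-1}(y^n)$ (lexicographic). $x^n+1$ and $x^n-1$ denote the immediate successor and predecessor in Gray order. $F(x^n)=\sum_{a^n\preceq_G x^n}p(a^n)$, with $F(x^n-1):=0$ if $x^n$ is the smallest element. For an interval $I=[a,b)$: $F_I(x^n)=a+(b-a)F(x^n)$; $\alpha_h:=\rho$; $\lambda_h(x^n)=\lfloor-\log_2(\alpha_h(b-a)p(x^n))\rfloor$ (an integer); $\bar F_I(x^n)=\lfloor F_I(x^n-1)+2^{-\lambda_h(x^n)}\rfloor_{\lambda_h(x^n)}$.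 For real $r\ge0$ and integer $l$, $\lfloor r\rfloor_l=2^{-l}\lfloor 2^lr\rfloor$. *)

theory Defs
  imports Complex_Main
begin

(* Binary strings x^n are bool lists of length n (False = 0, True = 1). *)
definition strings :: "nat \<Rightarrow> bool list set" where
  "strings n = {xs. length xs = n}"

definition gray :: "bool list \<Rightarrow> bool list" where
  "gray xs = map2 (\<noteq>) xs (False # butlast xs)"

definition gray_inv :: "nat \<Rightarrow> bool list \<Rightarrow> bool list" where
  "gray_inv n x = the_inv_into (strings n) gray x"

definition lex_le :: "bool list \<Rightarrow> bool list \<Rightarrow> bool" where
  "lex_le u v \<longleftrightarrow> u = v \<or> (u, v) \<in> lexord {(a, b). a < b}"

definition gray_le :: "nat \<Rightarrow> bool list \<Rightarrow> bool list \<Rightarrow> bool" where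
  "gray_le n x y \<longleftrightarrow> lex_le (gray_inv n x) (gray_inv n y)"

definition gray_less :: "nat \<Rightarrow> bool list \<Rightarrow> bool list \<Rightarrow> bool" where
  "gray_less n x y \<longleftrightarrow> gray_le n x y \<and> x \<noteq> y"

definition gray_smallest :: "nat \<Rightarrow> bool list \<Rightarrow> bool" where
  "gray_smallest n x \<longleftrightarrow> (\<forall>y\<in>strings n. gray_le n x y)"

definition gray_largest :: "nat \<Rightarrow> bool list \<Rightarrow> bool" where
  "gray_largest n x \<longleftrightarrow> (\<forall>y\<in>strings n. gray_le n y x)"

definition gray_succ :: "nat \<Rightarrow> bool list \<Rightarrow> bool list" where
  "gray_succ n x = (THE y. y \<in> strings n \<and> gray_less n x y \<and>
      \<not> (\<exists>z\<in>strings n. gray_less n x z \<and> gray_less n z y))"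

definition gray_pred :: "nat \<Rightarrow> bool list \<Rightarrow> bool list" where
  "gray_pred n x = (THE y. y \<in> strings n \<and> gray_less n y x \<and>
      \<not> (\<exists>z\<in>strings n. gray_less n y z \<and> gray_less n z x))"

definition pstr :: "(bool \<Rightarrow> real) \<Rightarrow> bool list \<Rightarrow> real" where
  "pstr p x = prod_list (map p x)"

definition Fcdf :: "(bool \<Rightarrow> real) \<Rightarrow> nat \<Rightarrow> bool list \<Rightarrow> real" where
  "Fcdf p n x = (\<Sum>a\<in>{a\<in>strings n. gray_le n a x}. pstr p a)"

definition Fprev :: "(bool \<Rightarrow> real) \<Rightarrow> nat \<Rightarrow> bool list \<Rightarrow> real" where
  "Fprev p n x = (if gray_smallest n x then 0 else Fcdf p n (gray_pred n x))"

definition FI :: "real \<Rightarrow> real \<Rightarrow> (bool \<Rightarrow> real) \<Rightarrow> nat \<Rightarrow> bool list \<Rightarrow> real" where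
  "FI a b p n x = a + (b - a) * Fcdf p n x"

definition FIprev :: "real \<Rightarrow> real \<Rightarrow> (bool \<Rightarrow> real) \<Rightarrow> nat \<Rightarrow> bool list \<Rightarrow> real" where
  "FIprev a b p n x = a + (b - a) * Fprev p n x"

definition rho :: "(bool \<Rightarrow> real) \<Rightarrow> real" where
  "rho p = max (p False / p True) (p True / p False)"

(* lambda_h(x^n) with alpha_h = rho *)
definition lam :: "real \<Rightarrow> real \<Rightarrow> (bool \<Rightarrow> real) \<Rightarrow> bool list \<Rightarrow> int" where
  "lam a b p x = \<lfloor>- log 2 (rho p * (b - a) * pstr p x)\<rfloor>"

definition rdown :: "real \<Rightarrow> int \<Rightarrow> real" where
  "rdown r l = 2 powr (- real_of_int l) * real_of_int \<lfloor>2 powr (real_of_int l) * r\<rfloor>"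

definition Fbar :: "real \<Rightarrow> real \<Rightarrow> (bool \<Rightarrow> real) \<Rightarrow> nat \<Rightarrow> bool list \<Rightarrow> real" where
  "Fbar a b p n x = rdown (FIprev a b p n x + 2 powr (- real_of_int (lam a b p x))) (lam a b p x)"

end

theory Submission
  imports Defs
begin

text \<open>
  Part (a): rounding \<open>F_I(x-1) + 2^-\<lambda>(x)\<close> down to \<open>\<lambda>(x)\<close> binary digits loses less than
  \<open>2^-\<lambda>(x)\<close>. Part (b): Gray neighbours differ in a single bit, so \<open>p(x) \<le> \<rho> p(x+1)\<close>;
  as \<open>\<rho> \<ge> 1\<close>, the step \<open>F_I(x) - F_I(x-1) = (b-a) p(x)\<close> is at most both \<open>2^-\<lambda>(x)\<close> and
  \<open>2^-\<lambda>(x+1)\<close>, and rounding in the coarser of the two precisions gives the claim.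
  Part (c) is (b) applied to \<open>x-1\<close>.
\<close>

fun bin_val :: "bool list \<Rightarrow> nat" where
  "bin_val [] = 0"
| "bin_val (b # xs) = (if b then 2 ^ length xs else 0) + bin_val xs"

lemma bin_val_less: "bin_val xs < 2 ^ length xs"
  by (induction xs) auto

lemma lexord_iff_bin_val_less:
  "length xs = length ys \<Longrightarrow>
    (xs, ys) \<in> lexord {(a, b). a < b} \<longleftrightarrow> bin_val xs < bin_val ys"
proof (induction xs arbitrary: ys)
  case (Cons x xs)
  then obtain y ys' where "ys = y # ys'" "length xs = length ys'"
    by (cases ys) auto
  with Cons.IH bin_val_less[of xs] bin_val_less[of ys'] show ?case
    by (cases x; cases y) auto
qed simp

lemma bin_val_inj: "length xs = length ys \<Longrightarrow> bin_val xs = bin_val ys \<Longrightarrow> xs = ys"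
proof (induction xs arbitrary: ys)
  case (Cons x xs)
  then obtain y ys' where "ys = y # ys'" "length xs = length ys'"
    by (cases ys) auto
  with Cons bin_val_less[of xs] bin_val_less[of ys'] show ?case
    by (cases x; cases y) auto
qed simp

lemma bin_val_eq_0: "bin_val us = 0 \<Longrightarrow> us = replicate (length us) False"
  by (induction us) (auto split: if_splits)

lemma bin_val_replicate_True: "bin_val (replicate m True) = 2 ^ m - 1"
  by (induction m) (auto simp: Suc_leI)

lemma bin_val_eq_max: "bin_val us = 2 ^ length us - 1 \<Longrightarrow> us = replicate (length us) True"
  using bin_val_inj[of us "replicate (length us) True"] bin_val_replicate_True by simp

lemma lex_le_iff_bin_val_le:
  "length xs = length ys \<Longrightarrow> lex_le xs ys \<longleftrightarrow> bin_val xs \<le> bin_val ys"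
  unfolding lex_le_def using lexord_iff_bin_val_less bin_val_inj by (metis le_eq_less_or_eq)

lemma finite_strings: "finite (strings n)"
  unfolding strings_def using finite_lists_length_eq[of "UNIV :: bool set" n] by simp

lemma card_strings: "card (strings n) = 2 ^ n"
  unfolding strings_def using card_lists_length_eq[of "UNIV :: bool set" n] by simp

lemma bij_betw_bin_val_strings: "bij_betw bin_val (strings n) {..<2 ^ n}"
proof -
  have inj: "inj_on bin_val (strings n)"
    by (auto simp: inj_on_def strings_def intro: bin_val_inj)
  moreover have "bin_val ` strings n \<subseteq> {..<2 ^ n}"
    using bin_val_less by (auto simp: strings_def)
  moreover have "card (bin_val ` strings n) = card {..<2 ^ n :: nat}"
    using card_image[OF inj] card_strings by simp
  ultimately show ?thesis
    by (simp add: bij_betw_def card_subset_eq)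
qed

section \<open>Gray code and Gray rank\<close>

definition flip_head :: "bool \<Rightarrow> bool list \<Rightarrow> bool list" where
  "flip_head b xs = (case xs of [] \<Rightarrow> [] | c # cs \<Rightarrow> (c \<noteq> b) # cs)"

lemma length_flip_head [simp]: "length (flip_head b xs) = length xs"
  by (cases xs) (auto simp: flip_head_def)

lemma flip_head_False [simp]: "flip_head False xs = xs"
  by (cases xs) (auto simp: flip_head_def)

lemma flip_head_inj: "flip_head b xs = flip_head b ys \<Longrightarrow> xs = ys"
  by (cases xs; cases ys) (auto simp: flip_head_def)

lemma gray_Nil [simp]: "gray [] = []"
  by (simp add: gray_def)

lemma gray_Cons: "gray (b # us) = b # flip_head b (gray us)"
  by (cases us) (auto simp: gray_def flip_head_def)

lemma length_gray [simp]: "length (gray xs) = length xs"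
  by (simp add: gray_def)

lemma gray_replicate_False: "gray (replicate m False) = replicate m False"
  by (induction m) (auto simp: gray_Cons)

lemma gray_replicate_True: "gray (replicate (Suc m) True) = True # replicate m False"
  by (induction m) (auto simp: gray_Cons flip_head_def)

lemma inj_gray: "inj gray"
proof (rule injI)
  show "gray xs = gray ys \<Longrightarrow> xs = ys" for xs ys
  proof (induction xs arbitrary: ys)
    case Nil
    then show ?case by (metis length_0_conv length_gray)
  next
    case (Cons x xs)
    then obtain y ys' where "ys = y # ys'"
      by (metis length_Suc_conv length_gray)
    with Cons show ?case by (auto simp: gray_Cons dest: flip_head_inj)
  qed
qed

lemma bij_betw_gray_strings: "bij_betw gray (strings n) (strings n)"
proof -
  have inj: "inj_on gray (strings n)"
    using inj_gray by (simp add: inj_on_def inj_def)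
  moreover have "gray ` strings n \<subseteq> strings n"
    by (auto simp: strings_def)
  moreover have "card (gray ` strings n) = card (strings n)"
    using card_image[OF inj] .
  ultimately show ?thesis
    using finite_strings by (simp add: bij_betw_def card_subset_eq)
qed

lemma bij_betw_gray_inv: "bij_betw (gray_inv n) (strings n) (strings n)"
  unfolding gray_inv_def using bij_betw_the_inv_into[OF bij_betw_gray_strings] .

lemma gray_gray_inv: "x \<in> strings n \<Longrightarrow> gray (gray_inv n x) = x"
  unfolding gray_inv_def by (rule f_the_inv_into_f_bij_betw[OF bij_betw_gray_strings])

lemma length_gray_inv: "x \<in> strings n \<Longrightarrow> length (gray_inv n x) = n"
  using bij_betwE[OF bij_betw_gray_inv] by (simp add: strings_def)

definition gray_rank :: "nat \<Rightarrow> bool list \<Rightarrow> nat" where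
  "gray_rank n x = bin_val (gray_inv n x)"

lemma bij_betw_gray_rank: "bij_betw (gray_rank n) (strings n) {..<2 ^ n}"
  using bij_betw_trans[OF bij_betw_gray_inv bij_betw_bin_val_strings]
  by (simp add: gray_rank_def[abs_def] comp_def)

lemma gray_rank_less: "x \<in> strings n \<Longrightarrow> gray_rank n x < 2 ^ n"
  using bij_betwE[OF bij_betw_gray_rank] by blast

lemma gray_rank_inj:
  "x \<in> strings n \<Longrightarrow> y \<in> strings n \<Longrightarrow> gray_rank n x = gray_rank n y \<Longrightarrow> x = y"
  using bij_betw_imp_inj_on[OF bij_betw_gray_rank] by (simp add: inj_on_def)

lemma gray_rank_surj: "k < 2 ^ n \<Longrightarrow> \<exists>x\<in>strings n. gray_rank n x = k"
  using bij_betw_imp_surj_on[OF bij_betw_gray_rank] by (metis imageE lessThan_iff)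

lemma gray_le_iff_rank_le:
  "x \<in> strings n \<Longrightarrow> y \<in> strings n \<Longrightarrow> gray_le n x y \<longleftrightarrow> gray_rank n x \<le> gray_rank n y"
  unfolding gray_le_def gray_rank_def by (simp add: lex_le_iff_bin_val_le length_gray_inv)

lemma gray_less_iff_rank_less:
  "x \<in> strings n \<Longrightarrow> y \<in> strings n \<Longrightarrow> gray_less n x y \<longleftrightarrow> gray_rank n x < gray_rank n y"
  unfolding gray_less_def using gray_le_iff_rank_le gray_rank_inj by (metis nat_less_le)

lemma gray_smallest_iff_rank_eq_0:
  assumes "x \<in> strings n"
  shows "gray_smallest n x \<longleftrightarrow> gray_rank n x = 0"
proof -
  obtain y where "y \<in> strings n" "gray_rank n y = 0"
    using gray_rank_surj[of 0 n] by auto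
  with assms show ?thesis
    unfolding gray_smallest_def by (auto simp: gray_le_iff_rank_le)
qed

lemma gray_largest_iff_Suc_rank_eq:
  assumes "x \<in> strings n"
  shows "gray_largest n x \<longleftrightarrow> Suc (gray_rank n x) = 2 ^ n"
proof -
  obtain y where "y \<in> strings n" "Suc (gray_rank n y) = 2 ^ n"
    using gray_rank_surj[of "2 ^ n - 1" n] by fastforce
  with assms gray_rank_less show ?thesis
    unfolding gray_largest_def by (fastforce simp: gray_le_iff_rank_le)
qed

lemma gray_succ_eqI:
  assumes x: "x \<in> strings n" and y: "y \<in> strings n"
    and rank: "gray_rank n y = Suc (gray_rank n x)"
  shows "gray_succ n x = y"
  unfolding gray_succ_def
proof (rule the_equality)
  show "y \<in> strings n \<and> gray_less n x y \<and> \<not> (\<exists>z\<in>strings n. gray_less n x z \<and> gray_less n z y)"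
    using x y rank by (auto simp: gray_less_iff_rank_less)
next
  fix y' assume "y' \<in> strings n \<and> gray_less n x y' \<and>
    \<not> (\<exists>z\<in>strings n. gray_less n x z \<and> gray_less n z y')"
  with x y rank have "y' \<in> strings n" "gray_rank n y' = gray_rank n y"
    by (auto simp: gray_less_iff_rank_less)
  with y show "y' = y" by (blast intro: gray_rank_inj)
qed

lemma gray_pred_eqI:
  assumes x: "x \<in> strings n" and y: "y \<in> strings n"
    and rank: "gray_rank n x = Suc (gray_rank n y)"
  shows "gray_pred n x = y"
  unfolding gray_pred_def
proof (rule the_equality)
  show "y \<in> strings n \<and> gray_less n y x \<and> \<not> (\<exists>z\<in>strings n. gray_less n y z \<and> gray_less n z x)"
    using x y rank by (auto simp: gray_less_iff_rank_less)
next
  fix y' assume "y' \<in> strings n \<and> gray_less n y' x \<and>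
    \<not> (\<exists>z\<in>strings n. gray_less n y' z \<and> gray_less n z x)"
  with x y rank have "y' \<in> strings n" "gray_rank n y' = gray_rank n y"
    by (auto simp: gray_less_iff_rank_less)
  with y show "y' = y" by (blast intro: gray_rank_inj)
qed

lemma gray_rank_gray_succ:
  assumes "x \<in> strings n" "\<not> gray_largest n x"
  shows "gray_succ n x \<in> strings n" "gray_rank n (gray_succ n x) = Suc (gray_rank n x)"
proof -
  have "Suc (gray_rank n x) < 2 ^ n"
    using assms gray_rank_less gray_largest_iff_Suc_rank_eq by (metis Suc_lessI)
  then obtain y where "y \<in> strings n" "gray_rank n y = Suc (gray_rank n x)"
    using gray_rank_surj by blast
  with assms gray_succ_eqI show "gray_succ n x \<in> strings n"
    "gray_rank n (gray_succ n x) = Suc (gray_rank n x)" by auto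
qed

lemma gray_rank_gray_pred:
  assumes "x \<in> strings n" "\<not> gray_smallest n x"
  shows "gray_pred n x \<in> strings n" "gray_rank n x = Suc (gray_rank n (gray_pred n x))"
proof -
  have "gray_rank n x - 1 < 2 ^ n"
    using assms gray_rank_less by (meson less_imp_diff_less)
  then obtain y where "y \<in> strings n" "gray_rank n x = Suc (gray_rank n y)"
    using assms gray_rank_surj gray_smallest_iff_rank_eq_0 by (metis Suc_pred' not_gr0)
  with assms gray_pred_eqI show "gray_pred n x \<in> strings n"
    "gray_rank n x = Suc (gray_rank n (gray_pred n x))" by auto
qed

lemma gray_succ_gray_pred:
  assumes "x \<in> strings n" "\<not> gray_smallest n x"
  shows "\<not> gray_largest n (gray_pred n x)" "gray_succ n (gray_pred n x) = x"
  using assms gray_rank_gray_pred[OF assms] gray_rank_less[OF assms(1)]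
  by (auto simp: gray_largest_iff_Suc_rank_eq intro: gray_succ_eqI)

section \<open>Gray neighbours differ in one bit\<close>

definition one_bit_apart :: "bool list \<Rightarrow> bool list \<Rightarrow> bool" where
  "one_bit_apart xs ys \<longleftrightarrow> (\<exists>i<length xs. ys = xs[i := \<not> xs ! i])"

lemma one_bit_apart_Cons: "one_bit_apart xs ys \<Longrightarrow> one_bit_apart (b # xs) (b # ys)"
  unfolding one_bit_apart_def by (metis Suc_less_eq length_Cons list_update_code(3) nth_Cons_Suc)

lemma one_bit_apart_flip_head:
  assumes "one_bit_apart xs ys"
  shows "one_bit_apart (flip_head c xs) (flip_head c ys)"
proof -
  obtain i where i: "i < length xs" "ys = xs[i := \<not> xs ! i]"
    using assms one_bit_apart_def by blast
  then obtain x0 rest where "xs = x0 # rest"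
    by (cases xs) auto
  with i show ?thesis
    unfolding one_bit_apart_def flip_head_def by (cases i) (auto intro!: exI[of _ i])
qed

text \<open>
  Incrementing either keeps the first bit and increments the tail, or turns \<open>01...1\<close> into
  \<open>10...0\<close>, whose Gray codes \<open>010...0\<close> and \<open>110...0\<close> differ in the first bit only.
\<close>

lemma one_bit_apart_gray_Suc:
  "length u = length u' \<Longrightarrow> bin_val u' = Suc (bin_val u) \<Longrightarrow> one_bit_apart (gray u) (gray u')"
proof (induction u arbitrary: u')
  case (Cons x xs)
  then obtain y ys where u': "u' = y # ys" and len: "length xs = length ys"
    by (cases u') auto
  note bounds = bin_val_less[of xs] bin_val_less[of ys]
  show ?case
  proof (cases "x = y")
    case True
    with Cons.prems u' len have "bin_val ys = Suc (bin_val xs)"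
      by (cases x) auto
    with Cons.IH len u' True show ?thesis
      by (simp add: gray_Cons one_bit_apart_Cons one_bit_apart_flip_head)
  next
    case False
    have xy: "\<not> x" "y"
      using Cons.prems u' len bounds False by (cases x; cases y, auto)+
    with Cons.prems u' len bounds have "bin_val ys = 0" "bin_val xs = 2 ^ length xs - 1"
      by auto
    then have xs: "xs = replicate (length xs) True" and ys: "ys = replicate (length xs) False"
      using bin_val_eq_0 bin_val_eq_max len by metis+
    show ?thesis
    proof (cases "length xs")
      case 0
      with xy u' len show ?thesis
        unfolding one_bit_apart_def by (auto simp: gray_Cons flip_head_def)
    next
      case (Suc k)
      with xs ys have "gray xs = True # replicate k False" "gray ys = replicate (Suc k) False"
        by (metis gray_replicate_True, metis gray_replicate_False)
      with xy u' show ?thesis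
        unfolding one_bit_apart_def by (auto simp: gray_Cons flip_head_def intro!: exI[of _ 0])
    qed
  qed
qed simp

lemma one_bit_apart_gray_succ:
  assumes "x \<in> strings n" "\<not> gray_largest n x"
  shows "one_bit_apart x (gray_succ n x)"
proof -
  let ?y = "gray_succ n x"
  have y: "?y \<in> strings n" "gray_rank n ?y = Suc (gray_rank n x)"
    using gray_rank_gray_succ[OF assms] by auto
  then have "one_bit_apart (gray (gray_inv n x)) (gray (gray_inv n ?y))"
    using assms(1) by (intro one_bit_apart_gray_Suc) (simp_all add: length_gray_inv gray_rank_def)
  then show ?thesis
    using assms(1) y(1) by (simp add: gray_gray_inv)
qed

lemma prod_list_map_update:
  fixes f :: "'a \<Rightarrow> 'b :: comm_monoid_mult"
  shows "i < length xs \<Longrightarrow>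
    prod_list (map f (xs[i := v])) * f (xs ! i) = prod_list (map f xs) * f v"
  by (induction xs arbitrary: i) (auto simp: mult_ac split: nat.split)

lemma pstr_pos:
  assumes "p False > 0" "p True > 0"
  shows "pstr p x > 0"
proof -
  have "p c > 0" for c
    using assms by (cases c) auto
  then show ?thesis
    unfolding pstr_def by (induction x) auto
qed

lemma rho_ge_1: "p False > 0 \<Longrightarrow> p True > 0 \<Longrightarrow> rho p \<ge> 1"
  unfolding rho_def by (cases "p False \<le> p True") (auto simp: le_max_iff_disj)

lemma pstr_le_rho_mult:
  assumes pos: "p False > 0" "p True > 0" and "one_bit_apart x y"
  shows "pstr p x \<le> rho p * pstr p y"
proof -
  obtain i where i: "i < length x" "y = x[i := \<not> x ! i]"
    using assms(3) one_bit_apart_def by blast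
  define c where "c = x ! i"
  have pc: "p c > 0" "p (\<not> c) > 0"
    using pos by (cases c; simp)+
  have "pstr p y * p c = pstr p x * p (\<not> c)"
    using prod_list_map_update[OF i(1), of p] i unfolding pstr_def c_def by simp
  then have "pstr p x = pstr p y * (p c / p (\<not> c))"
    using pc by (simp add: field_simps)
  also have "\<dots> \<le> pstr p y * rho p"
    using pstr_pos[OF pos, of y] by (intro mult_left_mono) (cases c, auto simp: rho_def)
  finally show ?thesis by (simp add: mult_ac)
qed

lemma Fcdf_eq_Fprev_add:
  assumes x: "x \<in> strings n"
  shows "Fcdf p n x = Fprev p n x + pstr p x"
proof -
  let ?below = "{a\<in>strings n. gray_rank n a < gray_rank n x}"
  have "{a\<in>strings n. gray_le n a x} = insert x ?below"
    using x by (auto simp: gray_le_iff_rank_le le_less dest: gray_rank_inj)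
  then have "Fcdf p n x = pstr p x + sum (pstr p) ?below"
    unfolding Fcdf_def using finite_strings by simp
  moreover have "sum (pstr p) ?below = Fprev p n x"
  proof (cases "gray_smallest n x")
    case True
    then show ?thesis
      using x by (simp add: Fprev_def gray_smallest_iff_rank_eq_0)
  next
    case False
    then have "?below = {a\<in>strings n. gray_le n a (gray_pred n x)}"
      using x gray_rank_gray_pred[OF x] by (auto simp: gray_le_iff_rank_le)
    with False show ?thesis
      by (simp add: Fprev_def Fcdf_def)
  qed
  ultimately show ?thesis by simp
qed

section \<open>Rounding down to dyadic precision\<close>

lemma two_powr_neg_cancel: "2 powr (- real_of_int l) * (2 powr real_of_int l * r) = (r :: real)"
  by (simp add: powr_minus)

lemma two_powr_cancel_neg: "2 powr real_of_int l * (2 powr (- real_of_int l) * r) = (r :: real)"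
  by (simp add: powr_minus)

lemma rdown_le: "rdown r l \<le> r"
proof -
  have "rdown r l \<le> 2 powr (- real_of_int l) * (2 powr real_of_int l * r)"
    unfolding rdown_def by (intro mult_left_mono) auto
  then show ?thesis
    by (simp only: two_powr_neg_cancel)
qed

lemma rdown_gt: "r - 2 powr (- real_of_int l) < rdown r l"
proof -
  have "r - 2 powr (- real_of_int l) = 2 powr (- real_of_int l) * (2 powr real_of_int l * r - 1)"
    by (simp add: right_diff_distrib two_powr_neg_cancel)
  also have "\<dots> < rdown r l"
    unfolding rdown_def by (intro mult_strict_left_mono) (linarith, simp)
  finally show ?thesis .
qed

lemma rdown_mono: "r \<le> s \<Longrightarrow> rdown r l \<le> rdown s l"
  unfolding rdown_def by (intro mult_left_mono) (auto intro: floor_mono)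

lemma rdown_dyadic: "rdown (2 powr (- real_of_int l) * of_int k) l = 2 powr (- real_of_int l) * of_int k"
  unfolding rdown_def by (simp only: two_powr_cancel_neg floor_of_int)

lemma rdown_le_dyadic:
  assumes "s < 2 powr (- real_of_int l) * of_int k + 2 powr (- real_of_int l)"
  shows "rdown s l \<le> 2 powr (- real_of_int l) * of_int k"
proof -
  have "2 powr real_of_int l * s < 2 powr real_of_int l * (2 powr (- real_of_int l) * (of_int k + 1))"
    using assms by (intro mult_strict_left_mono) (auto simp: distrib_left)
  then have "\<lfloor>2 powr real_of_int l * s\<rfloor> \<le> k"
    unfolding two_powr_cancel_neg by linarith
  then show ?thesis
    unfolding rdown_def by (intro mult_left_mono) auto
qed

lemma rdown_eq_dyadic_finer:
  assumes "l \<le> l'"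
  obtains k :: int where "rdown r l = 2 powr (- real_of_int l') * of_int k"
proof
  have "2 powr (- real_of_int l) = 2 powr (- real_of_int l') * 2 powr real (nat (l' - l))"
    using assms by (simp flip: powr_add)
  then show "rdown r l = 2 powr (- real_of_int l') * of_int (2 ^ nat (l' - l) * \<lfloor>2 powr real_of_int l * r\<rfloor>)"
    unfolding rdown_def by (simp add: powr_realpow)
qed

lemma rdown_le_rdown_finer:
  assumes "l' \<le> l"
  shows "rdown r l' \<le> rdown r l"
proof -
  obtain k where k: "rdown r l' = 2 powr (- real_of_int l) * of_int k"
    using rdown_eq_dyadic_finer[OF assms] .
  have "rdown (rdown r l') l \<le> rdown r l"
    by (intro rdown_mono rdown_le)
  then show ?thesis
    by (simp only: k rdown_dyadic)
qed

text \<open>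
  If \<open>l \<le> l'\<close>, the right-hand side exceeds \<open>s\<close> and lies on the grid \<open>2^-l' \<int>\<close>, so every
  \<open>r \<le> s + 2^-l'\<close> rounds to at most it; if \<open>l' < l\<close>, rounding to the coarser \<open>l'\<close> only decreases.
\<close>

lemma rdown_le_rdown_add:
  assumes "r \<le> s + 2 powr (- real_of_int l)" and "r \<le> s + 2 powr (- real_of_int l')"
  shows "rdown r l' \<le> rdown (s + 2 powr (- real_of_int l)) l"
proof (cases "l' < l")
  case True
  have "rdown r l' \<le> rdown (s + 2 powr (- real_of_int l)) l'"
    using assms(1) by (rule rdown_mono)
  also have "\<dots> \<le> rdown (s + 2 powr (- real_of_int l)) l"
    using True by (intro rdown_le_rdown_finer) simp
  finally show ?thesis .
next
  case False
  then obtain k where k: "rdown (s + 2 powr (- real_of_int l)) l = 2 powr (- real_of_int l') * of_int k"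
    using rdown_eq_dyadic_finer[of l l'] by (metis not_less)
  have "s < 2 powr (- real_of_int l') * of_int k"
    using rdown_gt[of "s + 2 powr (- real_of_int l)" l] k by simp
  with assms(2) have "r < 2 powr (- real_of_int l') * of_int k + 2 powr (- real_of_int l')"
    by simp
  then show ?thesis
    unfolding k by (rule rdown_le_dyadic)
qed

lemma le_two_powr_neg_floor_neg_log:
  assumes "v > 0"
  shows "v \<le> 2 powr (- real_of_int \<lfloor>- log 2 v\<rfloor>)"
proof -
  have "2 powr log 2 v \<le> 2 powr (- real_of_int \<lfloor>- log 2 v\<rfloor>)"
    by (intro powr_mono) linarith+
  with assms show ?thesis by simp
qed

lemma FI_eq_FIprev_add:
  "x \<in> strings n \<Longrightarrow> FI a b p n x = FIprev a b p n x + (b - a) * pstr p x"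
  unfolding FI_def FIprev_def by (simp add: Fcdf_eq_Fprev_add algebra_simps)

lemma FIprev_less_Fbar: "FIprev a b p n x < Fbar a b p n x"
  unfolding Fbar_def using rdown_gt by (metis add_diff_cancel_right')

lemma scaled_pstr_le_two_powr_neg_lam:
  assumes "p False > 0" "p True > 0" "a < b"
  shows "(b - a) * pstr p x \<le> 2 powr (- real_of_int (lam a b p x))"
    and "rho p * (b - a) * pstr p x \<le> 2 powr (- real_of_int (lam a b p x))"
proof -
  have pos: "(b - a) * pstr p x > 0"
    using assms pstr_pos by auto
  show mass: "rho p * (b - a) * pstr p x \<le> 2 powr (- real_of_int (lam a b p x))"
    unfolding lam_def using rho_ge_1[OF assms(1,2)] pos
    by (intro le_two_powr_neg_floor_neg_log) (simp add: mult.assoc)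
  have "(b - a) * pstr p x \<le> rho p * ((b - a) * pstr p x)"
    using mult_right_mono[OF rho_ge_1[OF assms(1,2)], of "(b - a) * pstr p x"] pos by simp
  with mass show "(b - a) * pstr p x \<le> 2 powr (- real_of_int (lam a b p x))"
    by (simp add: mult.assoc)
qed

lemma rdown_FI_le_Fbar:
  assumes "p False > 0" "p True > 0" "a < b"
    and x: "x \<in> strings n" "\<not> gray_largest n x"
  shows "rdown (FI a b p n x) (lam a b p (gray_succ n x)) \<le> Fbar a b p n x"
proof -
  let ?y = "gray_succ n x"
  have "(b - a) * pstr p x \<le> rho p * (b - a) * pstr p ?y"
    using pstr_le_rho_mult[OF assms(1,2) one_bit_apart_gray_succ[OF x]] assms(3) by simp
  also have "\<dots> \<le> 2 powr (- real_of_int (lam a b p ?y))"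
    using scaled_pstr_le_two_powr_neg_lam(2)[OF assms(1-3)] .
  finally show ?thesis
    unfolding Fbar_def FI_eq_FIprev_add[OF x(1)]
    using scaled_pstr_le_two_powr_neg_lam(1)[OF assms(1-3)] by (intro rdown_le_rdown_add) simp_all
qed

lemma interval_subset_rounded_interval:
  assumes "p False > 0" "p True > 0" "a < b"
    and x: "x \<in> strings n" "\<not> gray_smallest n x"
  shows "{min (Fbar a b p n (gray_pred n x)) (FIprev a b p n x) ..< min (Fbar a b p n x) (FI a b p n x)}
    \<subseteq> {rdown (FIprev a b p n x) (lam a b p x) ..< Fbar a b p n x}"
proof -
  let ?z = "gray_pred n x"
  have "FI a b p n ?z = FIprev a b p n x"
    using x(2) by (simp add: FI_def FIprev_def Fprev_def)
  then have "rdown (FIprev a b p n x) (lam a b p x) \<le> Fbar a b p n ?z"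
    using rdown_FI_le_Fbar[OF assms(1-3) gray_rank_gray_pred(1)[OF x] gray_succ_gray_pred(1)[OF x]]
      gray_succ_gray_pred(2)[OF x]
    by simp
  with rdown_le[of "FIprev a b p n x" "lam a b p x"] show ?thesis
    by auto
qed

theorem lemma2:
  fixes p :: "bool \<Rightarrow> real" and a b :: real and n :: nat
  assumes "0 < p False" "p False < 1" "0 < p True" "p True < 1"
    and "p False + p True = 1" and "p False \<noteq> p True"
    and "0 \<le> a" "a < b" "b \<le> 1"
  shows "(\<forall>x\<in>strings n. Fbar a b p n x \<ge> FIprev a b p n x)
    \<and> (\<forall>x\<in>strings n. \<not> gray_largest n x \<longrightarrow>
          Fbar a b p n x \<ge> rdown (FI a b p n x) (lam a b p (gray_succ n x)))
    \<and> (\<forall>x\<in>strings n. \<not> gray_smallest n x \<and> \<not> gray_largest n x \<longrightarrow>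
          {min (Fbar a b p n (gray_pred n x)) (FIprev a b p n x) ..<
           min (Fbar a b p n x) (FI a b p n x)}
          \<subseteq> {rdown (FIprev a b p n x) (lam a b p x) ..< Fbar a b p n x})"
  using FIprev_less_Fbar[THEN less_imp_le]
    rdown_FI_le_Fbar[OF assms(1,3,8)] interval_subset_rounded_interval[OF assms(1,3,8)]
  by blast

end
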